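(* Let $D_i,a_i,\lambda_i>0$ and $n_i\in[1,2]$ for $i\in\{1,2\}$. Then there exists $C>0$ such that for any $\chi_1>0$, $\chi_2>0$ and initial data satisfying (IE), $$\int_\Omega u_\varepsilon(\cdot,t)\ln(u_\varepsilon(\cdot,t)+e)+\frac{\chi_1}{\chi_2}\int_\Omega v_\varepsilon(\cdot,t)\ln(v_\varepsilon(\cdot,t)+e)\le\mathcal{F}_\varepsilon(t)+C\Big(1+\frac{\chi_1}{\chi_2}\Big)\Big\{1+\int_\Omega u_\varepsilon(\cdot,t)+\int_\Omega v_\varepsilon(\cdot,t)\Big\}$$ for all $t>0$ and $\varepsilon\in(0,1)$. Moreover, $\sup_{\varepsilon\in(0,1)}\mathcal{F}_\varepsilon(0)<\infty$.
   Context: Let $\Omega\subset\mathbb{R}$ be a bounded open interval and fix $\alpha\in(0,\frac12]$. Assumption (IE): $u_0,v_0\in W^{1,2}(\Omega)$ with $u_0>0,v_0>0$ in $\overline\Omega$; for each $\varepsilon\in(0,1)$, $u_{0\varepsilon},v_{0\varepsilon}\in C^5(\overline\Omega)$ with $u_{0\varepsilon x}=u_{0\varepsilon xxx}=v_{0\varepsilon x}=v_{0\varepsilon xxx}=0$ on $\partial\Omega$; $\frac12\inf_\Omega u_0\le u_{0\varepsilon}\le u_0+1$, $\frac12\inf_\Omega v_0\le v_{0\varepsilon}\le v_0+1$ in $\Omega$; $\int_\Omega u_{0\varepsilon x}^2\le\int_\Omega u_{0x}^2+1$, $\int_\Omega v_{0\varepsilon x}^2\le\int_\Omega v_{0x}^2+1$;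 $u_{0\varepsilon}\to u_0$, $v_{0\varepsilon}\to v_0$ a.e. as $\varepsilon\searrow0$. $(u_\varepsilon,v_\varepsilon)$ is the global positive classical solution of the approximating problem $u_t=-\varepsilon\big(\frac{u^4}{u^{4-n_1}+\varepsilon}u_{xxx}\big)_x+\varepsilon^{\alpha/2}(u^{-\alpha}u_x)_x+D_1u_{xx}-\chi_1\big(\frac{u^{5-n_1}}{u^{4-n_1}+\varepsilon}v_x\big)_x+\frac{3u^3}{3u^2+\varepsilon}(\lambda_1-u+a_1v)$, $v_t=-\varepsilon\big(\frac{v^4}{v^{4-n_2}+\varepsilon}v_{xxx}\big)_x+\varepsilon^{\alpha/2}(v^{-\alpha}v_x)_x+D_2v_{xx}+\chi_2\big(\frac{v^{5-n_2}}{v^{4-n_2}+\varepsilon}u_x\big)_x+\frac{3v^3}{3v^2+\varepsilon}(\lambda_2-v-a_2u)$ in $\Omega\times(0,\infty)$, $u_x=v_x=u_{xxx}=v_{xxx}=0$ on $\partial\Omega$, $u(\cdot,0)=u_{0\varepsilon}$, $v(\cdot,0)=v_{0\varepsilon}$ (global for $n_1,n_2\in[1,2]$). $\mathcal{F}_\varepsilon(t):=\int_\Omega u_\varepsilon\ln u_\varepsilon-\int_\Omega u_\varepsilon+\frac{\varepsilon}{(3-n_1)(4-n_1)}\int_\Omega u_\varepsilon^{-(3-n_1)}+\frac{\chi_1}{\chi_2}\Big(\int_\Omega v_\varepsilon\ln v_\varepsilon-\int_\Omega v_\varepsilon+\frac{\varepsilon}{(3-n_2)(4-n_2)}\int_\Omega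 v_\varepsilon^{-(3-n_2)}\Big)$, integrands at time $t\ge0$. *)

theory Defs
  imports "HOL-Analysis.Analysis"
begin

text \<open>The spatial domain is \<Omega> = {x0<..<x1}, closure {x0..x1}.
  Derivatives in x are taken within the closed interval (one-sided at the
  endpoints), derivatives in t at interior times.\<close>

definition dwithin :: "real \<Rightarrow> real \<Rightarrow> (real \<Rightarrow> real) \<Rightarrow> real \<Rightarrow> real" where
  "dwithin x0 x1 f = (\<lambda>x. vector_derivative f (at x within {x0..x1}))"

definition Ck_on :: "real \<Rightarrow> real \<Rightarrow> nat \<Rightarrow> (real \<Rightarrow> real) \<Rightarrow> bool" where
  "Ck_on x0 x1 k f \<longleftrightarrow>
     (\<forall>j<k. ((dwithin x0 x1 ^^ j) f) differentiable_on {x0..x1}) \<and>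
     (\<forall>j\<le>k. continuous_on {x0..x1} ((dwithin x0 x1 ^^ j) f))"

text \<open>W^{1,2}(\<Omega>) in one dimension: absolutely continuous representative
  with square integrable weak derivative g.\<close>
definition weak_deriv_W12 :: "real \<Rightarrow> real \<Rightarrow> (real \<Rightarrow> real) \<Rightarrow> (real \<Rightarrow> real) \<Rightarrow> bool" where
  "weak_deriv_W12 x0 x1 f g \<longleftrightarrow>
     g integrable_on {x0..x1} \<and> (\<lambda>x. (g x)\<^sup>2) integrable_on {x0..x1} \<and>
     (\<forall>x\<in>{x0..x1}. f x = f x0 + integral {x0..x} g)"

definition W12 :: "real \<Rightarrow> real \<Rightarrow> (real \<Rightarrow> real) \<Rightarrow> bool" where
  "W12 x0 x1 f \<longleftrightarrow> (\<exists>g. weak_deriv_W12 x0 x1 f g)"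

definition pdx :: "real \<Rightarrow> real \<Rightarrow> (real \<Rightarrow> real \<Rightarrow> real) \<Rightarrow> real \<Rightarrow> real \<Rightarrow> real" where
  "pdx x0 x1 w = (\<lambda>x t. vector_derivative (\<lambda>y. w y t) (at x within {x0..x1}))"

definition pdt :: "(real \<Rightarrow> real \<Rightarrow> real) \<Rightarrow> real \<Rightarrow> real \<Rightarrow> real" where
  "pdt w = (\<lambda>x t. vector_derivative (\<lambda>s. w x s) (at t))"

definition IE_comp :: "real \<Rightarrow> real \<Rightarrow> (real \<Rightarrow> real) \<Rightarrow> (real \<Rightarrow> real \<Rightarrow> real) \<Rightarrow> bool" where
  "IE_comp x0 x1 u0 u0e \<longleftrightarrow>
     W12 x0 x1 u0 \<and> (\<forall>x\<in>{x0..x1}. u0 x > 0) \<and>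
     (\<forall>\<epsilon>\<in>{0<..<1}.
        Ck_on x0 x1 5 (u0e \<epsilon>) \<and>
        (\<forall>x\<in>{x0,x1}. dwithin x0 x1 (u0e \<epsilon>) x = 0 \<and> (dwithin x0 x1 ^^ 3) (u0e \<epsilon>) x = 0) \<and>
        (\<forall>x\<in>{x0<..<x1}. Inf (u0 ` {x0<..<x1}) / 2 \<le> u0e \<epsilon> x \<and> u0e \<epsilon> x \<le> u0 x + 1) \<and>
        (\<exists>g. weak_deriv_W12 x0 x1 u0 g \<and>
           integral {x0..x1} (\<lambda>x. (dwithin x0 x1 (u0e \<epsilon>) x)\<^sup>2) \<le> integral {x0..x1} (\<lambda>x. (g x)\<^sup>2) + 1)) \<and>
     (AE x in lborel. x \<in> {x0<..<x1} \<longrightarrow> ((\<lambda>\<epsilon>. u0e \<epsilon> x) \<longlongrightarrow> u0 x) (at_right 0))"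

text \<open>Here w is the own component, z the other one; sg = -1 for the u-equation
  (term -chi1(...)_x) and +1 for the v-equation (term +chi2(...)_x); the reaction
  is 3w^3/(3w^2+\<epsilon>) (\<lambda> - w + c z) with c = a1 resp. c = -a2.\<close>
definition flux4 :: "real \<Rightarrow> real \<Rightarrow> real \<Rightarrow> real \<Rightarrow> (real \<Rightarrow> real \<Rightarrow> real) \<Rightarrow> real \<Rightarrow> real \<Rightarrow> real" where
  "flux4 x0 x1 n \<epsilon> w = (\<lambda>x t. (w x t)^4 / ((w x t) powr (4 - n) + \<epsilon>) * (pdx x0 x1 ^^ 3) w x t)"

definition fluxa :: "real \<Rightarrow> real \<Rightarrow> real \<Rightarrow> (real \<Rightarrow> real \<Rightarrow> real) \<Rightarrow> real \<Rightarrow> real \<Rightarrow> real" where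
  "fluxa x0 x1 \<alpha> w = (\<lambda>x t. (w x t) powr (-\<alpha>) * pdx x0 x1 w x t)"

definition fluxc :: "real \<Rightarrow> real \<Rightarrow> real \<Rightarrow> real \<Rightarrow> (real \<Rightarrow> real \<Rightarrow> real) \<Rightarrow> (real \<Rightarrow> real \<Rightarrow> real) \<Rightarrow> real \<Rightarrow> real \<Rightarrow> real" where
  "fluxc x0 x1 n \<epsilon> w z = (\<lambda>x t. (w x t) powr (5 - n) / ((w x t) powr (4 - n) + \<epsilon>) * pdx x0 x1 z x t)"

definition approx_rhs ::
  "real \<Rightarrow> real \<Rightarrow> real \<Rightarrow> real \<Rightarrow> real \<Rightarrow> real \<Rightarrow> real \<Rightarrow> real \<Rightarrow> real \<Rightarrow> real \<Rightarrow>
   (real \<Rightarrow> real \<Rightarrow> real) \<Rightarrow> (real \<Rightarrow> real \<Rightarrow> real) \<Rightarrow> real \<Rightarrow> real \<Rightarrow> real" where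
  "approx_rhs x0 x1 \<alpha> \<epsilon> n D sg chi lam c w z = (\<lambda>x t.
      - \<epsilon> * pdx x0 x1 (flux4 x0 x1 n \<epsilon> w) x t
      + \<epsilon> powr (\<alpha> / 2) * pdx x0 x1 (fluxa x0 x1 \<alpha> w) x t
      + D * (pdx x0 x1 ^^ 2) w x t
      + sg * chi * pdx x0 x1 (fluxc x0 x1 n \<epsilon> w z) x t
      + 3 * (w x t)^3 / (3 * (w x t)^2 + \<epsilon>) * (lam - w x t + c * z x t))"

definition classical_reg :: "real \<Rightarrow> real \<Rightarrow> real \<Rightarrow> real \<Rightarrow> real \<Rightarrow> (real \<Rightarrow> real \<Rightarrow> real) \<Rightarrow> (real \<Rightarrow> real \<Rightarrow> real) \<Rightarrow> bool" where
  "classical_reg x0 x1 \<alpha> \<epsilon> n w z \<longleftrightarrow>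
     (\<forall>t>0. \<forall>x\<in>{x0..x1}.
        (\<forall>k<4. (\<lambda>y. (pdx x0 x1 ^^ k) w y t) differentiable (at x within {x0..x1})) \<and>
        (\<lambda>y. flux4 x0 x1 n \<epsilon> w y t) differentiable (at x within {x0..x1}) \<and>
        (\<lambda>y. fluxa x0 x1 \<alpha> w y t) differentiable (at x within {x0..x1}) \<and>
        (\<lambda>y. fluxc x0 x1 n \<epsilon> w z y t) differentiable (at x within {x0..x1}) \<and>
        (\<lambda>s. w x s) differentiable (at t))"

definition approx_solution ::
  "real \<Rightarrow> real \<Rightarrow> real \<Rightarrow> real \<Rightarrow> real \<Rightarrow> real \<Rightarrow> real \<Rightarrow> real \<Rightarrow> real \<Rightarrow> real \<Rightarrow> real \<Rightarrow> real \<Rightarrow> real \<Rightarrow> real \<Rightarrow>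
   (real \<Rightarrow> real) \<Rightarrow> (real \<Rightarrow> real) \<Rightarrow> (real \<Rightarrow> real \<Rightarrow> real) \<Rightarrow> (real \<Rightarrow> real \<Rightarrow> real) \<Rightarrow> bool" where
  "approx_solution x0 x1 \<alpha> n1 n2 D1 D2 chi1 chi2 lam1 lam2 a1 a2 \<epsilon> u0e v0e u v \<longleftrightarrow>
     continuous_on ({x0..x1} \<times> {0..}) (\<lambda>(x,t). u x t) \<and>
     continuous_on ({x0..x1} \<times> {0..}) (\<lambda>(x,t). v x t) \<and>
     (\<forall>x\<in>{x0..x1}. \<forall>t\<ge>0. u x t > 0 \<and> v x t > 0) \<and>
     classical_reg x0 x1 \<alpha> \<epsilon> n1 u v \<and> classical_reg x0 x1 \<alpha> \<epsilon> n2 v u \<and>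
     (\<forall>t>0. \<forall>x\<in>{x0<..<x1}.
        pdt u x t = approx_rhs x0 x1 \<alpha> \<epsilon> n1 D1 (-1) chi1 lam1 a1 u v x t \<and>
        pdt v x t = approx_rhs x0 x1 \<alpha> \<epsilon> n2 D2 1 chi2 lam2 (-a2) v u x t) \<and>
     (\<forall>t>0. \<forall>x\<in>{x0,x1}.
        pdx x0 x1 u x t = 0 \<and> pdx x0 x1 v x t = 0 \<and>
        (pdx x0 x1 ^^ 3) u x t = 0 \<and> (pdx x0 x1 ^^ 3) v x t = 0) \<and>
     (\<forall>x\<in>{x0..x1}. u x 0 = u0e x \<and> v x 0 = v0e x)"

definition Fe :: "real \<Rightarrow> real \<Rightarrow> real \<Rightarrow> real \<Rightarrow> real \<Rightarrow> real \<Rightarrow> real \<Rightarrow>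
    (real \<Rightarrow> real \<Rightarrow> real) \<Rightarrow> (real \<Rightarrow> real \<Rightarrow> real) \<Rightarrow> real \<Rightarrow> real" where
  "Fe x0 x1 n1 n2 chi1 chi2 \<epsilon> u v t =
     integral {x0..x1} (\<lambda>x. u x t * ln (u x t)) - integral {x0..x1} (\<lambda>x. u x t)
     + \<epsilon> / ((3 - n1) * (4 - n1)) * integral {x0..x1} (\<lambda>x. (u x t) powr (-(3 - n1)))
     + chi1 / chi2 * (integral {x0..x1} (\<lambda>x. v x t * ln (v x t)) - integral {x0..x1} (\<lambda>x. v x t)
     + \<epsilon> / ((3 - n2) * (4 - n2)) * integral {x0..x1} (\<lambda>x. (v x t) powr (-(3 - n2))))"

end

theory Submission
  imports Defs
begin

text \<open>Pointwise, \<open>y ln (y + e) \<le> y ln y + e\<close> because \<open>ln (1 + e/y) \<le> e/y\<close>. Integrating,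
  the left-hand side of the estimate is at most \<open>\<F>\<^sub>\<epsilon>\<close> plus \<open>e |\<Omega>|\<close> plus the masses
  (which absorb the \<open>-\<integral> u\<close> terms of \<open>\<F>\<^sub>\<epsilon>\<close>), the \<open>\<epsilon>\<close>-terms of \<open>\<F>\<^sub>\<epsilon>\<close> being nonnegative.
  At \<open>t = 0\<close>, (IE) confines all \<open>u\<^sub>0\<^sub>\<epsilon>\<close> to one interval \<open>[m, M]\<close> with \<open>m > 0\<close>, because
  \<open>u\<^sub>0\<close> is continuous and positive on the closure of \<open>\<Omega>\<close>; hence every integrand of \<open>\<F>\<^sub>\<epsilon>(0)\<close> is bounded
  independently of \<open>\<epsilon> \<in> (0,1)\<close>.\<close>

definition Fe_comp :: "real \<Rightarrow> real \<Rightarrow> real \<Rightarrow> real \<Rightarrow> (real \<Rightarrow> real) \<Rightarrow> real" where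
  "Fe_comp a b n \<epsilon> f =
     integral {a..b} (\<lambda>x. f x * ln (f x)) - integral {a..b} f
     + \<epsilon> / ((3 - n) * (4 - n)) * integral {a..b} (\<lambda>x. f x powr (-(3 - n)))"

lemma Fe_eq_Fe_comp:
  "Fe x0 x1 n1 n2 chi1 chi2 \<epsilon> u v t =
     Fe_comp x0 x1 n1 \<epsilon> (\<lambda>x. u x t) + chi1 / chi2 * Fe_comp x0 x1 n2 \<epsilon> (\<lambda>x. v x t)"
  by (simp add: Fe_def Fe_comp_def)

lemma mult_ln_add_exp1_le:
  fixes y :: real
  assumes "y > 0"
  shows "y * ln (y + exp 1) \<le> y * ln y + exp 1"
proof -
  have pos: "y + exp 1 > 0" using assms by (simp add: add_pos_pos)
  have "ln (y + exp 1) - ln y = ln ((y + exp 1) / y)" using assms pos by (simp add: ln_div)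
  also have "\<dots> \<le> (y + exp 1) / y - 1" using assms pos by (intro ln_le_minus_one) simp
  also have "\<dots> = exp 1 / y" using assms by (simp add: field_simps)
  finally have "y * (ln (y + exp 1) - ln y) \<le> y * (exp 1 / y)"
    using assms by (intro mult_left_mono) auto
  thus ?thesis using assms by (simp add: algebra_simps)
qed

lemma integral_le_const_on_interior:
  fixes f :: "real \<Rightarrow> real"
  assumes "a \<le> b" and "f integrable_on {a..b}" and "\<And>x. x \<in> {a<..<b} \<Longrightarrow> f x \<le> K"
  shows "integral {a..b} f \<le> K * (b - a)"
proof -
  have "integral {a<..<b} f \<le> integral {a<..<b} (\<lambda>_. K)"
    using assms integrable_on_open_interval_real by (intro integral_le) auto
  thus ?thesis using assms(1) by (simp add: integral_open_interval_real[symmetric] mult.commute)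
qed

lemma continuous_on_slice:
  fixes w :: "real \<Rightarrow> real \<Rightarrow> real"
  assumes "continuous_on (A \<times> {0..}) (\<lambda>(x, t). w x t)" and "t \<ge> 0"
  shows "continuous_on A (\<lambda>x. w x t)"
proof -
  have "continuous_on A ((\<lambda>(x, t). w x t) \<circ> (\<lambda>x. (x, t)))"
    using assms by (intro continuous_on_compose continuous_on_subset[OF assms(1)] continuous_intros) auto
  thus ?thesis by (simp add: o_def)
qed

lemma W12_continuous_on:
  assumes "W12 a b f"
  shows "continuous_on {a..b} f"
proof -
  obtain g where g: "g integrable_on {a..b}" and f_eq: "\<forall>x\<in>{a..b}. f x = f a + integral {a..x} g"
    using assms by (auto simp: W12_def weak_deriv_W12_def)
  have "continuous_on {a..b} (\<lambda>x. f a + integral {a..x} g)"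
    using g by (intro continuous_intros indefinite_integral_continuous_1)
  thus ?thesis by (rule continuous_on_eq) (metis f_eq)
qed

lemma IE_comp_uniform_bounds:
  assumes "x0 < x1" and "IE_comp x0 x1 u0 u0e"
  obtains m M where "m > 0"
    and "\<And>\<epsilon> x. \<epsilon> \<in> {0<..<1} \<Longrightarrow> x \<in> {x0<..<x1} \<Longrightarrow> m \<le> u0e \<epsilon> x \<and> u0e \<epsilon> x \<le> M"
proof -
  have cont: "continuous_on {x0..x1} u0" and pos: "\<forall>x\<in>{x0..x1}. u0 x > 0"
    using assms(2) by (auto simp: IE_comp_def intro: W12_continuous_on)
  obtain xm where xm: "xm \<in> {x0..x1}" "\<forall>y\<in>{x0..x1}. u0 xm \<le> u0 y"
    using continuous_attains_inf[OF compact_Icc _ cont] assms(1) by auto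
  obtain xM where xM: "\<forall>y\<in>{x0..x1}. u0 y \<le> u0 xM"
    using continuous_attains_sup[OF compact_Icc _ cont] assms(1) by auto
  have min_le_Inf: "u0 xm \<le> Inf (u0 ` {x0<..<x1})"
    using assms(1) xm by (intro cInf_greatest) auto
  show ?thesis
  proof
    show "u0 xm / 2 > 0" using pos xm(1) by simp
    fix \<epsilon> x :: real assume "\<epsilon> \<in> {0<..<1}" and x: "x \<in> {x0<..<x1}"
    hence "Inf (u0 ` {x0<..<x1}) / 2 \<le> u0e \<epsilon> x \<and> u0e \<epsilon> x \<le> u0 x + 1"
      using assms(2) by (simp add: IE_comp_def)
    moreover have "u0 x \<le> u0 xM" using xM x by simp
    ultimately show "u0 xm / 2 \<le> u0e \<epsilon> x \<and> u0e \<epsilon> x \<le> u0 xM + 1" using min_le_Inf by linarith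
  qed
qed

lemma approx_solution_slices:
  assumes "approx_solution x0 x1 \<alpha> n1 n2 D1 D2 chi1 chi2 lam1 lam2 a1 a2 \<epsilon> u0e v0e u v"
    and "t \<ge> 0"
  shows "continuous_on {x0..x1} (\<lambda>x. u x t)" and "continuous_on {x0..x1} (\<lambda>x. v x t)"
    and "\<And>x. x \<in> {x0..x1} \<Longrightarrow> u x t > 0" and "\<And>x. x \<in> {x0..x1} \<Longrightarrow> v x t > 0"
  using assms by (auto simp: approx_solution_def intro: continuous_on_slice)

lemma integral_ln_add_exp1_le_Fe_comp:
  fixes f :: "real \<Rightarrow> real"
  assumes "a \<le> b" and cont: "continuous_on {a..b} f" and pos: "\<And>x. x \<in> {a..b} \<Longrightarrow> f x > 0"
    and "\<epsilon> \<ge> 0" and "n < 3"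
  shows "integral {a..b} (\<lambda>x. f x * ln (f x + exp 1))
     \<le> Fe_comp a b n \<epsilon> f + (exp 1 * (b - a) + integral {a..b} f)"
proof -
  have "f x + exp 1 > 0" if "x \<in> {a..b}" for x
    using pos[OF that] by (simp add: add_pos_pos)
  hence int_ln_add: "(\<lambda>x. f x * ln (f x + exp 1)) integrable_on {a..b}"
    by (intro integrable_continuous_real continuous_intros cont) force
  have int_ln: "(\<lambda>x. f x * ln (f x)) integrable_on {a..b}"
    using pos by (intro integrable_continuous_real continuous_intros cont) force
  have int_powr: "(\<lambda>x. f x powr (-(3 - n))) integrable_on {a..b}"
    using pos by (intro integrable_continuous_real continuous_intros cont) force
  have "integral {a..b} (\<lambda>x. f x * ln (f x + exp 1)) \<le> integral {a..b} (\<lambda>x. f x * ln (f x) + exp 1)"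
    using int_ln pos mult_ln_add_exp1_le by (intro integral_le int_ln_add) (auto intro!: integrable_add)
  also have "\<dots> = integral {a..b} (\<lambda>x. f x * ln (f x)) + exp 1 * (b - a)"
    using int_ln \<open>a \<le> b\<close> by (subst integral_add) (auto simp: mult.commute)
  finally have "integral {a..b} (\<lambda>x. f x * ln (f x + exp 1))
      \<le> integral {a..b} (\<lambda>x. f x * ln (f x)) + exp 1 * (b - a)" .
  moreover have "\<epsilon> / ((3 - n) * (4 - n)) * integral {a..b} (\<lambda>x. f x powr (-(3 - n))) \<ge> 0"
    using assms int_powr by (intro mult_nonneg_nonneg integral_nonneg) auto
  ultimately show ?thesis by (simp add: Fe_comp_def)
qed

lemma Fe_comp_le_of_bounds:
  fixes f :: "real \<Rightarrow> real"
  assumes "a < b" and cont: "continuous_on {a..b} f" and pos: "\<And>x. x \<in> {a..b} \<Longrightarrow> f x > 0"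
    and bounds: "\<And>x. x \<in> {a<..<b} \<Longrightarrow> m \<le> f x \<and> f x \<le> M" and "m > 0"
    and "0 < \<epsilon>" "\<epsilon> < 1" and "n < 3"
  shows "Fe_comp a b n \<epsilon> f \<le> (M\<^sup>2 + m powr (-(3 - n)) / ((3 - n) * (4 - n))) * (b - a)"
proof -
  have k: "(3 - n) * (4 - n) > 0" using \<open>n < 3\<close> by simp
  have int_ln: "(\<lambda>x. f x * ln (f x)) integrable_on {a..b}"
    using pos by (intro integrable_continuous_real continuous_intros cont) force
  have int_powr: "(\<lambda>x. f x powr (-(3 - n))) integrable_on {a..b}"
    using pos by (intro integrable_continuous_real continuous_intros cont) force
  have "f x * ln (f x) \<le> M\<^sup>2" if "x \<in> {a<..<b}" for x
  proof -
    have fx: "0 < f x" "f x \<le> M" using pos bounds that by auto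
    have "f x * ln (f x) \<le> f x * (f x - 1)" using fx by (intro mult_left_mono ln_le_minus_one) auto
    also have "\<dots> \<le> f x * f x" using fx by (simp add: algebra_simps)
    also have "\<dots> \<le> M\<^sup>2" using fx by (simp add: power2_eq_square mult_mono')
    finally show ?thesis .
  qed
  hence ent: "integral {a..b} (\<lambda>x. f x * ln (f x)) \<le> M\<^sup>2 * (b - a)"
    using \<open>a < b\<close> int_ln by (intro integral_le_const_on_interior) auto
  have "integral {a..b} (\<lambda>x. f x powr (-(3 - n))) \<le> m powr (-(3 - n)) * (b - a)"
    using assms int_powr by (intro integral_le_const_on_interior powr_mono2') auto
  moreover have "integral {a..b} (\<lambda>x. f x powr (-(3 - n))) \<ge> 0"
    using int_powr by (intro integral_nonneg) auto
  ultimately have "\<epsilon> / ((3 - n) * (4 - n)) * integral {a..b} (\<lambda>x. f x powr (-(3 - n)))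
      \<le> 1 / ((3 - n) * (4 - n)) * (m powr (-(3 - n)) * (b - a))"
    using assms k by (intro mult_mono divide_right_mono) auto
  moreover have "integral {a..b} f \<ge> 0"
    using pos by (intro integral_nonneg integrable_continuous_real cont) (simp add: less_imp_le)
  ultimately show ?thesis using ent unfolding Fe_comp_def distrib_right by simp
qed

lemma weighted_sum_le_with_mass:
  fixes K Iu Iv r Lu Lv Fu Fv :: real
  assumes "K \<ge> 0" "Iu \<ge> 0" "Iv \<ge> 0" "r > 0"
    and "Lu \<le> Fu + (K + Iu)" and "Lv \<le> Fv + (K + Iv)"
  shows "Lu + r * Lv \<le> Fu + r * Fv + (K + 1) * (1 + r) * (1 + Iu + Iv)"
proof -
  have "K + Iu \<le> (K + 1) * (1 + Iu + Iv)" and "K + Iv \<le> (K + 1) * (1 + Iu + Iv)"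
    using assms(1-3) by (simp_all add: algebra_simps)
  hence "Lu \<le> Fu + (K + 1) * (1 + Iu + Iv)" and "Lv \<le> Fv + (K + 1) * (1 + Iu + Iv)"
    using assms(5,6) by linarith+
  hence "Lu + r * Lv \<le> Fu + (K + 1) * (1 + Iu + Iv) + r * (Fv + (K + 1) * (1 + Iu + Iv))"
    using \<open>r > 0\<close> by (intro add_mono mult_left_mono) auto
  thus ?thesis by (simp add: algebra_simps)
qed

lemma approx_solution_entropy_le:
  assumes "x0 < x1" and "n1 < 3" and "n2 < 3" and "chi1 > 0" and "chi2 > 0"
    and "\<epsilon> \<ge> 0" and "t \<ge> 0"
    and sol: "approx_solution x0 x1 \<alpha> n1 n2 D1 D2 chi1 chi2 lam1 lam2 a1 a2 \<epsilon> u0e v0e u v"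
  shows "integral {x0..x1} (\<lambda>x. u x t * ln (u x t + exp 1))
          + chi1 / chi2 * integral {x0..x1} (\<lambda>x. v x t * ln (v x t + exp 1))
         \<le> Fe x0 x1 n1 n2 chi1 chi2 \<epsilon> u v t
          + (exp 1 * (x1 - x0) + 1) * (1 + chi1 / chi2)
            * (1 + integral {x0..x1} (\<lambda>x. u x t) + integral {x0..x1} (\<lambda>x. v x t))"
proof -
  note slices = approx_solution_slices[OF sol \<open>t \<ge> 0\<close>]
  have mass_u: "integral {x0..x1} (\<lambda>x. u x t) \<ge> 0" and mass_v: "integral {x0..x1} (\<lambda>x. v x t) \<ge> 0"
    using slices by (auto intro!: integral_nonneg integrable_continuous_real simp: less_imp_le)
  show ?thesis
    unfolding Fe_eq_Fe_comp
    using assms slices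
    by (intro weighted_sum_le_with_mass[OF _ mass_u mass_v] integral_ln_add_exp1_le_Fe_comp) auto
qed

lemma approx_solution_Fe_initial_le:
  assumes "x0 < x1" and "n1 < 3" and "n2 < 3" and "chi1 > 0" and "chi2 > 0"
    and "0 < \<epsilon>" and "\<epsilon> < 1"
    and sol: "approx_solution x0 x1 \<alpha> n1 n2 D1 D2 chi1 chi2 lam1 lam2 a1 a2 \<epsilon> u0e v0e u v"
    and "mu > 0" and "\<And>x. x \<in> {x0<..<x1} \<Longrightarrow> mu \<le> u0e x \<and> u0e x \<le> Mu"
    and "mv > 0" and "\<And>x. x \<in> {x0<..<x1} \<Longrightarrow> mv \<le> v0e x \<and> v0e x \<le> Mv"
  shows "Fe x0 x1 n1 n2 chi1 chi2 \<epsilon> u v 0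
     \<le> (Mu\<^sup>2 + mu powr (-(3 - n1)) / ((3 - n1) * (4 - n1))) * (x1 - x0)
       + chi1 / chi2 * ((Mv\<^sup>2 + mv powr (-(3 - n2)) / ((3 - n2) * (4 - n2))) * (x1 - x0))"
proof -
  note slices = approx_solution_slices[OF sol order_refl]
  have initial: "u x 0 = u0e x" "v x 0 = v0e x" if "x \<in> {x0<..<x1}" for x
    using sol that by (simp_all add: approx_solution_def)
  have "Fe_comp x0 x1 n1 \<epsilon> (\<lambda>x. u x 0) \<le> (Mu\<^sup>2 + mu powr (-(3 - n1)) / ((3 - n1) * (4 - n1))) * (x1 - x0)"
    using assms slices initial by (intro Fe_comp_le_of_bounds) auto
  moreover have "Fe_comp x0 x1 n2 \<epsilon> (\<lambda>x. v x 0) \<le> (Mv\<^sup>2 + mv powr (-(3 - n2)) / ((3 - n2) * (4 - n2))) * (x1 - x0)"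
    using assms slices initial by (intro Fe_comp_le_of_bounds) auto
  ultimately show ?thesis
    unfolding Fe_eq_Fe_comp using assms by (intro add_mono mult_left_mono) auto
qed

lemma approx_solution_family_Fe_initial_bdd_above:
  assumes "x0 < x1" and n: "n1 < 3" "n2 < 3" and chi: "chi1 > 0" "chi2 > 0"
    and IE_u: "IE_comp x0 x1 u0 u0e" and IE_v: "IE_comp x0 x1 v0 v0e"
    and sol: "\<forall>\<epsilon>\<in>{0<..<1}. approx_solution x0 x1 \<alpha> n1 n2 D1 D2 chi1 chi2 lam1 lam2 a1 a2 \<epsilon>
                        (u0e \<epsilon>) (v0e \<epsilon>) (u \<epsilon>) (v \<epsilon>)"
  shows "bdd_above ((\<lambda>\<epsilon>. Fe x0 x1 n1 n2 chi1 chi2 \<epsilon> (u \<epsilon>) (v \<epsilon>) 0) ` {0<..<1})"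
proof -
  obtain mu Mu where mu: "mu > 0"
    and bounds_u: "\<And>\<epsilon> x. \<epsilon> \<in> {0<..<1} \<Longrightarrow> x \<in> {x0<..<x1} \<Longrightarrow> mu \<le> u0e \<epsilon> x \<and> u0e \<epsilon> x \<le> Mu"
    using IE_comp_uniform_bounds[OF \<open>x0 < x1\<close> IE_u] by blast
  obtain mv Mv where mv: "mv > 0"
    and bounds_v: "\<And>\<epsilon> x. \<epsilon> \<in> {0<..<1} \<Longrightarrow> x \<in> {x0<..<x1} \<Longrightarrow> mv \<le> v0e \<epsilon> x \<and> v0e \<epsilon> x \<le> Mv"
    using IE_comp_uniform_bounds[OF \<open>x0 < x1\<close> IE_v] by blast
  show ?thesis
  proof (rule bdd_aboveI2)
    fix \<epsilon> :: real assume "\<epsilon> \<in> {0<..<1}"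
    with sol show "Fe x0 x1 n1 n2 chi1 chi2 \<epsilon> (u \<epsilon>) (v \<epsilon>) 0
       \<le> (Mu\<^sup>2 + mu powr (-(3 - n1)) / ((3 - n1) * (4 - n1))) * (x1 - x0)
         + chi1 / chi2 * ((Mv\<^sup>2 + mv powr (-(3 - n2)) / ((3 - n2) * (4 - n2))) * (x1 - x0))"
      using mu bounds_u mv bounds_v by (intro approx_solution_Fe_initial_le[OF \<open>x0 < x1\<close> n chi]) auto
  qed
qed

theorem lemma3p3:
  fixes x0 x1 \<alpha> D1 D2 a1 a2 lam1 lam2 n1 n2 :: real
  assumes "x0 < x1"
    and "0 < \<alpha>" and "\<alpha> \<le> 1/2"
    and "D1 > 0" and "D2 > 0" and "a1 > 0" and "a2 > 0" and "lam1 > 0" and "lam2 > 0"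
    and "1 \<le> n1" and "n1 \<le> 2" and "1 \<le> n2" and "n2 \<le> 2"
  shows "\<exists>C>0. \<forall>chi1 chi2 u0 v0 u0e v0e u v.
     chi1 > 0 \<longrightarrow> chi2 > 0 \<longrightarrow>
     IE_comp x0 x1 u0 u0e \<longrightarrow> IE_comp x0 x1 v0 v0e \<longrightarrow>
     (\<forall>\<epsilon>\<in>{0<..<1}. approx_solution x0 x1 \<alpha> n1 n2 D1 D2 chi1 chi2 lam1 lam2 a1 a2 \<epsilon>
                        (u0e \<epsilon>) (v0e \<epsilon>) (u \<epsilon>) (v \<epsilon>)) \<longrightarrow>
     (\<forall>t>0. \<forall>\<epsilon>\<in>{0<..<1}.
        integral {x0..x1} (\<lambda>x. u \<epsilon> x t * ln (u \<epsilon> x t + exp 1))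
        + chi1 / chi2 * integral {x0..x1} (\<lambda>x. v \<epsilon> x t * ln (v \<epsilon> x t + exp 1))
        \<le> Fe x0 x1 n1 n2 chi1 chi2 \<epsilon> (u \<epsilon>) (v \<epsilon>) t
           + C * (1 + chi1 / chi2) * (1 + integral {x0..x1} (\<lambda>x. u \<epsilon> x t)
                                      + integral {x0..x1} (\<lambda>x. v \<epsilon> x t))) \<and>
     bdd_above ((\<lambda>\<epsilon>. Fe x0 x1 n1 n2 chi1 chi2 \<epsilon> (u \<epsilon>) (v \<epsilon>) 0) ` {0<..<1})"
proof -
  have n: "n1 < 3" "n2 < 3" using assms by simp_all
  show ?thesis
    apply (intro exI[of _ "exp 1 * (x1 - x0) + 1"] conjI allI impI ballI)
    subgoal using assms(1) by (simp add: add_nonneg_pos)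
    subgoal using assms(1) n by (intro approx_solution_entropy_le) auto
    subgoal using assms(1) n by (intro approx_solution_family_Fe_initial_bdd_above) auto
    done
qed

end
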